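(* Let $p,q\ge0$ with $p+q<1$, $0<\theta<1$, and $k<n$ positive integers. Define \[ m_{\mathrm{COMP}}=\min_{\alpha,d}\max\left\{\frac{\theta}{1-\theta}\frac{1}{d\,D_{\mathrm{KL}}(\alpha\|q)},\ \frac{1}{1-\theta}\frac{1}{d\,D_{\mathrm{KL}}\big(\alpha\|e^{-d}(1-p)+(1-e^{-d})q\big)}\right\}k\log(n/k) \] and \[ m^{\mathrm{Ber}}_{\mathrm{COMP}}=\min_{\alpha,d}\max\left\{\frac{\theta}{1-\theta}\frac{1}{k\,D_{\mathrm{KL}}(\alpha d/k\,\|\,qd/k)},\ \frac{1}{1-\theta}\frac{1}{k\,D_{\mathrm{KL}}\big(\alpha d/k\,\|\,(e^{-d}(1-p)+(1-e^{-d})q)d/k\big)}\right\}k\log(n/k), \] both minima over $d\in(0,\infty)$ and $\alpha\in\big(q,\ e^{-d}(1-p)+(1-e^{-d})q\big)$ (with $d<k$). Then $m^{\mathrm{Ber}}_{\mathrm{COMP}}\ge m_{\mathrm{COMP}}$.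
   Context: $\log$ is the natural logarithm; $D_{\mathrm{KL}}(r\|s)=r\log(r/s)+(1-r)\log\frac{1-r}{1-s}$, extended by continuity at $r$ or $s\in\{0,1\}$. (These are the sufficient numbers of tests for noisy COMP under the constant-column design and under the Bernoulli design, respectively, in the noisy group testing model with false-positive probability $p$ and false-negative probability $q$.) *)

theory Defs
  imports "HOL-Analysis.Analysis" "HOL-Library.Extended_Real"
begin

text \<open>One summand a log(a/b) of the binary KL divergence, extended by continuity
  (0 log(0/b) = 0, a log(a/0) = +infinity for a > 0).\<close>
definition kl_term :: "real \<Rightarrow> real \<Rightarrow> ereal" where
  "kl_term a b = (if a = 0 then 0 else if b = 0 then \<infinity> else ereal (a * ln (a / b)))"

definition D_KL :: "real \<Rightarrow> real \<Rightarrow> ereal" where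
  "D_KL r s = kl_term r s + kl_term (1 - r) (1 - s)"

definition rho :: "real \<Rightarrow> real \<Rightarrow> real \<Rightarrow> real" where
  "rho p q d = exp (- d) * (1 - p) + (1 - exp (- d)) * q"

definition m_COMP :: "real \<Rightarrow> real \<Rightarrow> real \<Rightarrow> nat \<Rightarrow> nat \<Rightarrow> ereal" where
  "m_COMP p q \<theta> k n =
     (INF (\<alpha>, d) \<in> {(\<alpha>, d). 0 < d \<and> q < \<alpha> \<and> \<alpha> < rho p q d}.
        max (ereal (\<theta> / (1 - \<theta>)) * inverse (ereal d * D_KL \<alpha> q))
            (ereal (1 / (1 - \<theta>)) * inverse (ereal d * D_KL \<alpha> (rho p q d))))
     * ereal (real k * ln (real n / real k))"

definition m_COMP_Ber :: "real \<Rightarrow> real \<Rightarrow> real \<Rightarrow> nat \<Rightarrow> nat \<Rightarrow> ereal" where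
  "m_COMP_Ber p q \<theta> k n =
     (INF (\<alpha>, d) \<in> {(\<alpha>, d). 0 < d \<and> d < real k \<and> q < \<alpha> \<and> \<alpha> < rho p q d}.
        max (ereal (\<theta> / (1 - \<theta>)) *
               inverse (ereal (real k) * D_KL (\<alpha> * d / real k) (q * d / real k)))
            (ereal (1 / (1 - \<theta>)) *
               inverse (ereal (real k) * D_KL (\<alpha> * d / real k) (rho p q d * d / real k))))
     * ereal (real k * ln (real n / real k))"

end

theory Submission
  imports Defs
begin

text \<open>The Bernoulli parameter set is contained in the constant-column one, and on it each
  Bernoulli term dominates the corresponding constant-column term. With \<open>t = d / k \<in> (0, 1)\<close>
  this is the scaling inequality \<open>D(t a \<parallel> t b) \<le> t D(a \<parallel> b)\<close>, an instance of joint convexity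
  of the KL divergence for the mixture \<open>t (a, b) + (1 - t) (0, 0)\<close>: the first summand of \<open>D\<close> is
  exactly homogeneous, and the second is bounded by the log-sum inequality applied to
  \<open>1 - t a = t (1 - a) + (1 - t)\<close> and \<open>1 - t b = t (1 - b) + (1 - t)\<close>.\<close>

lemma diff_le_mult_ln_div:
  fixes x y :: real
  assumes "0 < x" "0 < y"
  shows "x - y \<le> x * ln (x / y)"
proof -
  have "ln (y / x) \<le> y / x - 1"
    using assms by (intro ln_le_minus_one) simp
  then have "1 - y / x \<le> ln (x / y)"
    using assms by (simp add: ln_div)
  then have "x * (1 - y / x) \<le> x * ln (x / y)"
    using assms by (intro mult_left_mono) auto
  then show ?thesis
    using assms by (simp add: algebra_simps)
qed

lemma log_sum_inequality:
  fixes x1 x2 y1 y2 :: real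
  assumes "0 < x1" "0 < x2" "0 < y1" "0 < y2"
  shows "(x1 + x2) * ln ((x1 + x2) / (y1 + y2)) \<le> x1 * ln (x1 / y1) + x2 * ln (x2 / y2)"
proof -
  define X Y where "X = x1 + x2" and "Y = y1 + y2"
  have XY: "0 < X" "0 < Y"
    using assms by (auto simp: X_def Y_def)
  have split: "x * ln (x / y) = x * ln (X / Y) + x * ln (x / (y * X / Y))"
    if "0 < x" "0 < y" for x y
    using that XY by (simp add: ln_div ln_mult algebra_simps)
  \<comment> \<open>the rescaled weights \<open>y\<^sub>i X / Y\<close> have the same total mass \<open>X\<close> as the \<open>x\<^sub>i\<close>\<close>
  have "0 = (x1 - y1 * X / Y) + (x2 - y2 * X / Y)"
    using XY by (simp add: X_def Y_def field_simps)
  also have "\<dots> \<le> x1 * ln (x1 / (y1 * X / Y)) + x2 * ln (x2 / (y2 * X / Y))"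
    using assms XY by (intro add_mono diff_le_mult_ln_div) auto
  finally show ?thesis
    using assms by (simp add: split[of x1 y1] split[of x2 y2] X_def Y_def algebra_simps)
qed

lemma kl_term_ge_diff:
  assumes "0 \<le> a" "0 \<le> b"
  shows "ereal (a - b) \<le> kl_term a b"
  using assms diff_le_mult_ln_div[of a b] by (auto simp: kl_term_def)

lemma D_KL_nonneg:
  assumes "0 \<le> r" "r \<le> 1" "0 \<le> s" "s \<le> 1"
  shows "0 \<le> D_KL r s"
proof -
  have "ereal ((r - s) + ((1 - r) - (1 - s))) \<le> kl_term r s + kl_term (1 - r) (1 - s)"
    unfolding plus_ereal.simps(1)[symmetric] using assms
    by (intro add_mono kl_term_ge_diff) auto
  then show ?thesis
    by (simp add: D_KL_def zero_ereal_def)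
qed

lemma kl_term_scale:
  assumes "0 < t"
  shows "kl_term (t * a) (t * b) = ereal t * kl_term a b"
  using assms by (simp add: kl_term_def)

lemma D_KL_scale_le:
  fixes a b t :: real
  assumes "0 \<le> a" "a < 1" "0 \<le> b" "b < 1" "0 < t" "t < 1"
  shows "D_KL (t * a) (t * b) \<le> ereal t * D_KL a b"
proof -
  have "(1 - t * a) * ln ((1 - t * a) / (1 - t * b))
      \<le> t * (1 - a) * ln (t * (1 - a) / (t * (1 - b))) + (1 - t) * ln ((1 - t) / (1 - t))"
    using log_sum_inequality[of "t * (1 - a)" "1 - t" "t * (1 - b)" "1 - t"] assms
    by (simp add: algebra_simps)
  also have "\<dots> = t * ((1 - a) * ln ((1 - a) / (1 - b)))"
    using assms by simp
  finally have "kl_term (1 - t * a) (1 - t * b) \<le> ereal t * kl_term (1 - a) (1 - b)"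
    using assms mult_strict_mono[of t 1 a 1] mult_strict_mono[of t 1 b 1]
    by (simp add: kl_term_def)
  then have "D_KL (t * a) (t * b) \<le> ereal t * kl_term a b + ereal t * kl_term (1 - a) (1 - b)"
    using assms by (simp add: D_KL_def kl_term_scale add_left_mono)
  also have "\<dots> = ereal t * D_KL a b"
    using assms by (simp add: D_KL_def ereal_pos_distrib)
  finally show ?thesis .
qed

lemma scaled_inverse_D_KL_le:
  fixes c a b d K :: real
  assumes "0 \<le> c" "0 \<le> a" "a < 1" "0 \<le> b" "b < 1" "0 < d" "d < K"
  shows "ereal c * inverse (ereal d * D_KL a b)
    \<le> ereal c * inverse (ereal K * D_KL (a * d / K) (b * d / K))"
proof -
  define t where "t = d / K"
  have t: "0 < t" "t < 1" "K * t = d"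
    using assms by (auto simp: t_def)
  have scaled: "a * d / K = t * a" "b * d / K = t * b"
    by (simp_all add: t_def)
  have "0 \<le> D_KL (t * a) (t * b)"
    using assms t by (intro D_KL_nonneg mult_le_one) auto
  moreover have "ereal K * D_KL (t * a) (t * b) \<le> ereal d * D_KL a b"
  proof -
    have "ereal K * D_KL (t * a) (t * b) \<le> ereal K * (ereal t * D_KL a b)"
      using assms t by (intro ereal_mult_left_mono D_KL_scale_le) auto
    then show ?thesis
      by (simp add: t(3) mult.assoc[symmetric])
  qed
  ultimately show ?thesis
    unfolding scaled using assms
    by (intro ereal_mult_left_mono ereal_inverse_antimono) auto
qed

lemma rho_lt_one:
  assumes "0 \<le> p" "q < 1" "0 < d"
  shows "rho p q d < 1"
proof -
  have "exp (- d) * (1 - p) + (1 - exp (- d)) * q < exp (- d) * 1 + (1 - exp (- d)) * 1"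
    using assms by (intro add_mono_thms_linordered_field(4) mult_left_mono mult_strict_left_mono) auto
  then show ?thesis
    by (simp add: rho_def)
qed

theorem proposition2p15:
  fixes p q \<theta> :: real and k n :: nat
  assumes "0 \<le> p" and "0 \<le> q" and "p + q < 1"
    and "0 < \<theta>" and "\<theta> < 1"
    and "0 < k" and "k < n"
  shows "m_COMP_Ber p q \<theta> k n \<ge> m_COMP p q \<theta> k n"
proof -
  define objective where "objective = (\<lambda>(\<alpha>, d). max
     (ereal (\<theta> / (1 - \<theta>)) * inverse (ereal d * D_KL \<alpha> q))
     (ereal (1 / (1 - \<theta>)) * inverse (ereal d * D_KL \<alpha> (rho p q d))))"
  define objective_Ber where "objective_Ber = (\<lambda>(\<alpha>, d). max
     (ereal (\<theta> / (1 - \<theta>)) * inverse (ereal (real k) * D_KL (\<alpha> * d / real k) (q * d / real k)))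
     (ereal (1 / (1 - \<theta>)) * inverse (ereal (real k) * D_KL (\<alpha> * d / real k) (rho p q d * d / real k))))"
  have objective_le: "objective (\<alpha>, d) \<le> objective_Ber (\<alpha>, d)"
    if "0 < d" "d < real k" "q < \<alpha>" "\<alpha> < rho p q d" for \<alpha> d
  proof -
    have "rho p q d < 1"
      using assms that by (intro rho_lt_one) auto
    then show ?thesis
      unfolding objective_def objective_Ber_def using assms that
      by (simp only: case_prod_conv, intro max.mono scaled_inverse_D_KL_le) auto
  qed
  have "(INF x \<in> {(\<alpha>, d). 0 < d \<and> q < \<alpha> \<and> \<alpha> < rho p q d}. objective x)
      \<le> (INF x \<in> {(\<alpha>, d). 0 < d \<and> d < real k \<and> q < \<alpha> \<and> \<alpha> < rho p q d}. objective_Ber x)"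
    using objective_le by (intro INF_superset_mono) auto
  moreover have "0 \<le> ereal (real k * ln (real n / real k))"
    using assms by simp
  ultimately show ?thesis
    unfolding m_COMP_def m_COMP_Ber_def objective_def objective_Ber_def
    by (rule ereal_mult_right_mono)
qed

end
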